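(* Let $\omega\colon\mathbf Z_+\to(0,+\infty)$ be a positive weight, and for $\mu\in\mathbf C$ and $m\ge1$ let \[h_m(\mu,z)=\sum_{n\ge0}\mu^n\big(z^{(6m+4)2^n}-z^{(2m+1)2^n}\big),\qquad h_0(\mu,z)=\sum_{n\ge0}\mu^nz^{2^{n+2}}.\] For every $m\ge0$ and $\mu\in\mathbf C$, $h_m(\mu,\cdot)$ belongs to $\mathcal X_\omega$ if and only if the series $\sum_{n\ge0}|\mu|^{2n}/\omega((2m+1)2^n)$ and $\sum_{n\ge0}|\mu|^{2n}/\omega((6m+4)2^n)$ converge; in this case $\mathcal Th_m(\mu,\cdot)=\mu h_m(\mu,\cdot)$. In particular, if $\omega$ is bounded from below then $h_m(\mu,\cdot)\in\mathcal X_\omega$ for every $m\ge0$ and every $\mu$ in the open unit disk $\mathbf D$; and if $\omega=\omega_0$, where $\omega_0(n)=(n+1)/\pi$, then $h_m(\mu,\cdot)\in\mathcal X_{\omega_0}$ for every $m\ge0$ and every $\mu\in\mathbf C$ with $|\mu|<\sqrt2$.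
   Context: $T\colon\mathbf Z_+\to\mathbf Z_+$ is the modified Collatz map: $T(n)=n/2$ for $n$ even, $T(n)=(3n+1)/2$ for $n$ odd. $\mathcal X_\omega$ is the Hilbert space of holomorphic functions $f(z)=\sum_{n\ge3}c_nz^n$ on the unit disk with $\|f\|_\omega^2=\sum_{n\ge3}|c_n|^2/\omega(n)<\infty$ (the quotient of the weighted Bergman space $\mathcal B^2_\omega$ by $\mathrm{span}[1,z,z^2]$). $\mathcal T$ acts on such power series by $\mathcal T\sum_{n\ge3}c_nz^n=\sum_{j\ge3,\,T(j)\ge3}c_jz^{T(j)}$, i.e. the coefficient of $z^k$ ($k\ge3$) in $\mathcal Tf$ is $\sum_{j\ge3,\,T(j)=k}c_j$. *)

theory Defs
  imports "HOL-Analysis.Analysis"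
begin

definition collatzT :: "nat \<Rightarrow> nat" where
  "collatzT n = (if even n then n div 2 else (3 * n + 1) div 2)"

definition tcoeff :: "(complex \<Rightarrow> complex) \<Rightarrow> nat \<Rightarrow> complex" where
  "tcoeff f n = (deriv ^^ n) f 0 / of_nat (fact n)"

definition in_X :: "(nat \<Rightarrow> real) \<Rightarrow> (complex \<Rightarrow> complex) \<Rightarrow> bool" where
  "in_X \<omega> f \<longleftrightarrow> f holomorphic_on ball 0 1 \<and> (\<forall>n<3. tcoeff f n = 0)
     \<and> summable (\<lambda>n. (cmod (tcoeff f n))\<^sup>2 / \<omega> n)"

definition collatz_op :: "(complex \<Rightarrow> complex) \<Rightarrow> complex \<Rightarrow> complex" where
  "collatz_op f z = (\<Sum>k. (if k \<ge> 3 then (\<Sum>j\<in>{j. 3 \<le> j \<and> collatzT j = k}. tcoeff f j) else 0) * z ^ k)"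

definition hfun :: "nat \<Rightarrow> complex \<Rightarrow> complex \<Rightarrow> complex" where
  "hfun m \<mu> z = (if m = 0 then (\<Sum>n. \<mu> ^ n * z ^ (2 ^ (n + 2)))
     else (\<Sum>n. \<mu> ^ n * (z ^ ((6 * m + 4) * 2 ^ n) - z ^ ((2 * m + 1) * 2 ^ n))))"

definition omega0 :: "nat \<Rightarrow> real" where
  "omega0 n = (real n + 1) / pi"

end

theory Submission
  imports Defs
begin

text \<open>The Taylor coefficients of \<open>h\<^sub>m(\<mu>, \<cdot>)\<close> live on the dyadic orbits \<open>b 2\<^sup>n\<close> of
  \<open>b = 2m + 1\<close> and \<open>b = 6m + 4\<close> (of \<open>b = 4\<close> if \<open>m = 0\<close>), with value \<open>\<plusminus>\<mu>\<^sup>n\<close> at \<open>b 2\<^sup>n\<close>.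
  For \<open>m \<ge> 1\<close> the two orbits are disjoint, since \<open>2m + 1 < 3m + 2 < 2(2m + 1)\<close>, so the
  weighted norm of \<open>h\<^sub>m\<close> splits into the two series of the statement.
  The preimages of \<open>k \<ge> 3\<close> under \<open>T\<close> are \<open>2k\<close> and, if it is an odd integer,
  \<open>(2k - 1)/3\<close>. Along an orbit the coefficient at \<open>2k\<close> is \<open>\<mu>\<close> times the one at \<open>k\<close>;
  the only defect is the start \<open>6m + 4 = 2(3m + 2)\<close> of the second orbit, and it is
  cancelled exactly by the odd preimage \<open>2m + 1\<close> of \<open>3m + 2\<close>, whose coefficient is \<open>-1\<close>.
  Hence \<open>\<T>h\<^sub>m = \<mu>h\<^sub>m\<close>. The two special weights are handled by comparison with a
  geometric series, using \<open>\<omega>(b 2\<^sup>n) \<ge> c\<close> resp. \<open>\<omega>\<^sub>0(b 2\<^sup>n) \<ge> 2\<^sup>n/\<pi>\<close>.\<close>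

fun dyadic_coeff :: "nat \<Rightarrow> complex \<Rightarrow> nat \<Rightarrow> complex" where
  "dyadic_coeff b \<mu> k =
     (if k = b then 1 else if b < k \<and> even k then \<mu> * dyadic_coeff b \<mu> (k div 2) else 0)"

declare dyadic_coeff.simps [simp del]

lemma dyadic_coeff_less: "k < b \<Longrightarrow> dyadic_coeff b \<mu> k = 0"
  by (subst dyadic_coeff.simps) auto

lemma dyadic_coeff_odd: "odd k \<Longrightarrow> dyadic_coeff b \<mu> k = (if k = b then 1 else 0)"
  by (subst dyadic_coeff.simps) auto

lemma dyadic_coeff_orbit:
  assumes "b \<ge> 1"
  shows "dyadic_coeff b \<mu> (b * 2 ^ n) = \<mu> ^ n"
proof (induction n)
  case 0
  then show ?case by (subst dyadic_coeff.simps) auto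
next
  case (Suc n)
  have "b < b * 2 ^ Suc n"
    using assms one_less_power[of "2::nat" "Suc n"] by simp
  then show ?case
    using Suc by (subst dyadic_coeff.simps) auto
qed

lemma dyadic_coeff_not_orbit:
  "k \<notin> range (\<lambda>n. b * 2 ^ n) \<Longrightarrow> dyadic_coeff b \<mu> k = 0"
proof (induction k rule: less_induct)
  case (less k)
  have "k \<noteq> b"
    using less.prems by (metis power_0 mult_1_right rangeI)
  moreover have "dyadic_coeff b \<mu> (k div 2) = 0" if "b < k" "even k"
  proof -
    have "k div 2 \<notin> range (\<lambda>n. b * 2 ^ n)"
    proof
      assume "k div 2 \<in> range (\<lambda>n. b * 2 ^ n)"
      then obtain n where "k div 2 = b * 2 ^ n"
        by auto
      with \<open>even k\<close> have "k = b * 2 ^ Suc n"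
        by auto
      with less.prems show False
        by (metis rangeI)
    qed
    with less.IH that show ?thesis
      by auto
  qed
  ultimately show ?case
    by (subst dyadic_coeff.simps) auto
qed

lemma dyadic_coeff_double:
  assumes "b \<ge> 1"
  shows "dyadic_coeff b \<mu> (2 * k) = \<mu> * dyadic_coeff b \<mu> k + (if 2 * k = b then 1 else 0)"
proof (cases "b < 2 * k")
  case False
  then have "k < b"
    using assms by linarith
  with False show ?thesis
    by (subst dyadic_coeff.simps) (auto simp: dyadic_coeff_less)
qed (subst dyadic_coeff.simps, auto)

lemma strict_mono_dyadic: "b \<ge> 1 \<Longrightarrow> strict_mono (\<lambda>n. b * 2 ^ n :: nat)"
  by (intro strict_monoI) (simp add: power_strict_increasing)

lemma summable_dyadic_series:
  fixes z \<mu> :: complex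
  assumes z: "norm z < 1" and b: "b \<ge> 1"
  shows "summable (\<lambda>n. \<mu> ^ n * z ^ (b * 2 ^ n))"
proof -
  have "(\<lambda>n. norm \<mu> * norm z ^ n) \<longlonglongrightarrow> 0"
    using z by (intro tendsto_mult_right_zero LIMSEQ_power_zero) simp
  then have "eventually (\<lambda>n. norm \<mu> * norm z ^ n < 1/2) sequentially"
    by (rule order_tendstoD) simp
  then obtain N where N: "\<And>n. n \<ge> N \<Longrightarrow> norm \<mu> * norm z ^ n < 1/2"
    by (auto simp: eventually_sequentially)
  show ?thesis
  proof (rule summable_ratio_test[of "1/2" N])
    fix n
    assume "n \<ge> N"
    have "n \<le> 2 ^ n"
      by (simp add: less_exp less_imp_le)
    also have "\<dots> \<le> b * 2 ^ n"
      using b by simp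
    finally have "norm z ^ (b * 2 ^ n) \<le> norm z ^ n"
      using z by (intro power_decreasing) auto
    then have ratio: "norm \<mu> * norm z ^ (b * 2 ^ n) \<le> 1/2"
      using N[OF \<open>n \<ge> N\<close>] mult_left_mono[of _ _ "norm \<mu>"] by fastforce
    have "norm (\<mu> ^ Suc n * z ^ (b * 2 ^ Suc n))
        = (norm \<mu> * norm z ^ (b * 2 ^ n)) * norm (\<mu> ^ n * z ^ (b * 2 ^ n))"
      by (simp add: norm_mult norm_power power_add mult_2 algebra_simps)
    also have "\<dots> \<le> 1/2 * norm (\<mu> ^ n * z ^ (b * 2 ^ n))"
      using ratio by (intro mult_right_mono) auto
    finally show "norm (\<mu> ^ Suc n * z ^ (b * 2 ^ Suc n)) \<le> 1/2 * norm (\<mu> ^ n * z ^ (b * 2 ^ n))" .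
  qed simp
qed

lemma dyadic_coeff_sums:
  fixes z \<mu> :: complex
  assumes z: "norm z < 1" and b: "b \<ge> 1"
  shows "(\<lambda>k. dyadic_coeff b \<mu> k * z ^ k) sums (\<Sum>n. \<mu> ^ n * z ^ (b * 2 ^ n))"
proof -
  have "(\<lambda>n. dyadic_coeff b \<mu> (b * 2 ^ n) * z ^ (b * 2 ^ n)) sums (\<Sum>n. \<mu> ^ n * z ^ (b * 2 ^ n))"
    using summable_dyadic_series[OF z b] by (simp add: dyadic_coeff_orbit[OF b] summable_sums)
  then show ?thesis
    using sums_mono_reindex[OF strict_mono_dyadic[OF b], of "\<lambda>k. dyadic_coeff b \<mu> k * z ^ k"]
    by (simp add: dyadic_coeff_not_orbit)
qed

definition hcoeff :: "nat \<Rightarrow> complex \<Rightarrow> nat \<Rightarrow> complex" where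
  "hcoeff m \<mu> k = (if m = 0 then dyadic_coeff 4 \<mu> k
     else dyadic_coeff (6 * m + 4) \<mu> k - dyadic_coeff (2 * m + 1) \<mu> k)"

lemma hfun_sums:
  assumes z: "norm z < 1"
  shows "(\<lambda>k. hcoeff m \<mu> k * z ^ k) sums hfun m \<mu> z"
proof (cases "m = 0")
  case True
  have "(\<lambda>n. \<mu> ^ n * z ^ (2 ^ (n + 2))) = (\<lambda>n. \<mu> ^ n * z ^ (4 * 2 ^ n))"
    by (simp add: power_add mult.commute)
  with True dyadic_coeff_sums[OF z, of 4 \<mu>] show ?thesis
    by (simp add: hcoeff_def hfun_def)
next
  case False
  let ?S = "\<lambda>b. \<Sum>n. \<mu> ^ n * z ^ (b * 2 ^ n)"
  have "(\<lambda>k. dyadic_coeff (6 * m + 4) \<mu> k * z ^ k - dyadic_coeff (2 * m + 1) \<mu> k * z ^ k)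
      sums (?S (6 * m + 4) - ?S (2 * m + 1))"
    by (intro sums_diff dyadic_coeff_sums z) auto
  moreover have "?S (6 * m + 4) - ?S (2 * m + 1)
      = (\<Sum>n. \<mu> ^ n * (z ^ ((6 * m + 4) * 2 ^ n) - z ^ ((2 * m + 1) * 2 ^ n)))"
    using suminf_diff[OF summable_dyadic_series[OF z, of "6 * m + 4" \<mu>]
                         summable_dyadic_series[OF z, of "2 * m + 1" \<mu>]]
    by (simp only: right_diff_distrib)
  ultimately show ?thesis
    using False by (simp add: hcoeff_def hfun_def algebra_simps)
qed

lemma fps_conv_radius_hcoeff: "fps_conv_radius (Abs_fps (hcoeff m \<mu>)) \<ge> 1"
  unfolding fps_conv_radius_def
proof (rule conv_radius_geI_ex)
  fix r :: real
  assume "r > 0" "ereal r < 1"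
  then show "\<exists>z::complex. norm z = r \<and> summable (\<lambda>n. fps_nth (Abs_fps (hcoeff m \<mu>)) n * z ^ n)"
    using hfun_sums[of "of_real r" m \<mu>] by (intro exI[of _ "of_real r"]) (auto simp: sums_iff)
qed

lemma eval_fps_hcoeff: "norm z < 1 \<Longrightarrow> eval_fps (Abs_fps (hcoeff m \<mu>)) z = hfun m \<mu> z"
  unfolding eval_fps_def using hfun_sums[of z m \<mu>] by (simp add: sums_iff)

lemma hfun_holomorphic: "hfun m \<mu> holomorphic_on ball 0 1"
proof -
  have "ball 0 1 \<subseteq> eball 0 (fps_conv_radius (Abs_fps (hcoeff m \<mu>)))"
    using fps_conv_radius_hcoeff[of m \<mu>] order.strict_trans2[of "ereal _" 1]
    by (auto simp: subset_eq dist_0_norm)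
  then have "eval_fps (Abs_fps (hcoeff m \<mu>)) holomorphic_on ball 0 1"
    by (rule holomorphic_on_eval_fps)
  then show ?thesis
    by (rule holomorphic_cong[THEN iffD1, rotated 2]) (auto simp: eval_fps_hcoeff)
qed

lemma tcoeff_hfun: "tcoeff (hfun m \<mu>) n = hcoeff m \<mu> n"
proof -
  have "hfun m \<mu> has_fps_expansion Abs_fps (hcoeff m \<mu>)"
    unfolding has_fps_expansion_def
  proof
    show "0 < fps_conv_radius (Abs_fps (hcoeff m \<mu>))"
      using fps_conv_radius_hcoeff[of m \<mu>] order.strict_trans2[of "0::ereal" 1] by simp
    have "eventually (\<lambda>z. z \<in> ball (0::complex) 1) (nhds 0)"
      by (intro eventually_nhds_in_open) auto
    then show "eventually (\<lambda>z. eval_fps (Abs_fps (hcoeff m \<mu>)) z = hfun m \<mu> z) (nhds 0)"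
      by eventually_elim (auto simp: eval_fps_hcoeff)
  qed
  from fps_nth_fps_expansion[OF this, of n] show ?thesis
    by (simp add: tcoeff_def)
qed

lemma hcoeff_less_3: "k < 3 \<Longrightarrow> hcoeff m \<mu> k = 0"
  by (auto simp: hcoeff_def dyadic_coeff_less)

lemma hcoeff_odd: "odd j \<Longrightarrow> hcoeff m \<mu> j = (if m \<noteq> 0 \<and> j = 2 * m + 1 then -1 else 0)"
  by (auto simp: hcoeff_def dyadic_coeff_odd)

lemma hcoeff_double:
  assumes "k \<ge> 3"
  shows "hcoeff m \<mu> (2 * k) = \<mu> * hcoeff m \<mu> k + (if m \<noteq> 0 \<and> k = 3 * m + 2 then 1 else 0)"
proof -
  have "2 * k \<noteq> 2 * m + 1"
    by presburger
  then show ?thesis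
    using assms dyadic_coeff_double[of 4 \<mu> k] dyadic_coeff_double[of "6 * m + 4" \<mu> k]
      dyadic_coeff_double[of "2 * m + 1" \<mu> k]
    by (simp add: hcoeff_def algebra_simps)
qed

lemma collatzT_preimage:
  "k \<ge> 3 \<Longrightarrow> {j. 3 \<le> j \<and> collatzT j = k} = insert (2 * k) {j. 3 \<le> j \<and> odd j \<and> 3 * j + 1 = 2 * k}"
  by (auto simp: collatzT_def; presburger)

lemma sum_hcoeff_collatzT_preimage:
  assumes k: "k \<ge> 3"
  shows "(\<Sum>j\<in>{j. 3 \<le> j \<and> collatzT j = k}. hcoeff m \<mu> j) = \<mu> * hcoeff m \<mu> k"
proof -
  let ?O = "{j. 3 \<le> j \<and> odd j \<and> 3 * j + 1 = 2 * k}"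
  have fin: "finite ?O"
    by (rule finite_subset[of _ "{..2 * k}"]) auto
  have "(\<Sum>j\<in>{j. 3 \<le> j \<and> collatzT j = k}. hcoeff m \<mu> j) = hcoeff m \<mu> (2 * k) + (\<Sum>j\<in>?O. hcoeff m \<mu> j)"
    using fin by (simp add: collatzT_preimage[OF k])
  also have "(\<Sum>j\<in>?O. hcoeff m \<mu> j) = (\<Sum>j\<in>?O. if j = 2 * m + 1 then (if m \<noteq> 0 then -1 else 0) else 0)"
    by (intro sum.cong) (auto simp: hcoeff_odd)
  also have "\<dots> = (if m \<noteq> 0 \<and> k = 3 * m + 2 then -1 else 0)"
    using fin by (simp add: sum.delta)
  finally show ?thesis
    using hcoeff_double[OF k, of m \<mu>] by simp
qed

lemma collatz_op_hfun:
  assumes "z \<in> ball 0 1"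
  shows "collatz_op (hfun m \<mu>) z = \<mu> * hfun m \<mu> z"
proof -
  have "(\<lambda>k. (if k \<ge> 3 then (\<Sum>j\<in>{j. 3 \<le> j \<and> collatzT j = k}. tcoeff (hfun m \<mu>) j) else 0) * z ^ k)
      = (\<lambda>k. \<mu> * (hcoeff m \<mu> k * z ^ k))"
    by (auto simp: tcoeff_hfun sum_hcoeff_collatzT_preimage hcoeff_less_3)
  moreover have "(\<lambda>k. \<mu> * (hcoeff m \<mu> k * z ^ k)) sums (\<mu> * hfun m \<mu> z)"
    using assms by (intro sums_mult hfun_sums) auto
  ultimately show ?thesis
    unfolding collatz_op_def by (simp add: sums_iff)
qed

lemma mult_power2_neq:
  fixes x y :: nat
  assumes "y < x" "x < 2 * y"
  shows "x * 2 ^ i \<noteq> y * 2 ^ j"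
proof
  assume eq: "x * 2 ^ i = y * 2 ^ j"
  show False
  proof (cases "i \<le> j")
    case True
    with eq have "x * 2 ^ i = y * 2 ^ (j - i) * 2 ^ i"
      by (simp add: power_add[symmetric])
    then have "x = y * 2 ^ (j - i)"
      by simp
    with assms show False
      by (cases "j - i") auto
  next
    case False
    with eq have "x * 2 ^ (i - j) * 2 ^ j = y * 2 ^ j"
      by (simp add: mult.assoc power_add[symmetric])
    then have "y = x * 2 ^ (i - j)"
      by simp
    moreover have "x * 1 \<le> x * 2 ^ (i - j)"
      by (intro mult_le_mono2) simp
    ultimately show False
      using assms by linarith
  qed
qed

lemma dyadic_coeff_orbits_disjoint:
  assumes "m \<ge> 1"
  shows "dyadic_coeff (6 * m + 4) \<mu> k = 0 \<or> dyadic_coeff (2 * m + 1) \<mu> k = 0"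
proof -
  have "(6 * m + 4) * 2 ^ a \<noteq> (2 * m + 1) * 2 ^ b" for a b
    using mult_power2_neq[of "2 * m + 1" "3 * m + 2" "Suc a" b] assms
    by (simp add: algebra_simps)
  then show ?thesis
    using dyadic_coeff_not_orbit[of k "6 * m + 4" \<mu>] dyadic_coeff_not_orbit[of k "2 * m + 1" \<mu>]
    by blast
qed

lemma summable_add_nonneg_iff:
  fixes f g :: "nat \<Rightarrow> real"
  assumes "\<And>k. f k \<ge> 0" "\<And>k. g k \<ge> 0"
  shows "summable (\<lambda>k. f k + g k) \<longleftrightarrow> summable f \<and> summable g"
proof
  assume s: "summable (\<lambda>k. f k + g k)"
  have "summable f" "summable g"
    by (rule summable_comparison_test[OF _ s], use assms in auto)+
  then show "summable f \<and> summable g" ..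
qed (auto intro: summable_add)

lemma summable_dyadic_coeff_weighted_iff:
  fixes \<omega> :: "nat \<Rightarrow> real"
  assumes "b \<ge> 1"
  shows "summable (\<lambda>k. (cmod (dyadic_coeff b \<mu> k))\<^sup>2 / \<omega> k)
     \<longleftrightarrow> summable (\<lambda>n. cmod \<mu> ^ (2 * n) / \<omega> (b * 2 ^ n))"
  using summable_mono_reindex[OF strict_mono_dyadic[OF assms], of "\<lambda>k. (cmod (dyadic_coeff b \<mu> k))\<^sup>2 / \<omega> k"]
  by (simp add: dyadic_coeff_not_orbit dyadic_coeff_orbit[OF assms] norm_power power_even_eq)

lemma summable_dyadic_weight_shift:
  fixes \<omega> :: "nat \<Rightarrow> real"
  assumes "summable (\<lambda>n. r ^ (2 * n) / \<omega> (b * 2 ^ k * 2 ^ n))"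
  shows "summable (\<lambda>n. r ^ (2 * n) / \<omega> (b * 2 ^ n))"
proof -
  have "(\<lambda>n. r ^ (2 * (n + k)) / \<omega> (b * 2 ^ (n + k)))
      = (\<lambda>n. r ^ (2 * k) * (r ^ (2 * n) / \<omega> (b * 2 ^ k * 2 ^ n)))"
    by (simp add: power_add mult_ac)
  with summable_mult[OF assms, of "r ^ (2 * k)"] show ?thesis
    using summable_iff_shift[of "\<lambda>n. r ^ (2 * n) / \<omega> (b * 2 ^ n)" k] by simp
qed

lemma in_X_hfun_iff:
  fixes \<omega> :: "nat \<Rightarrow> real"
  assumes pos: "\<forall>n\<ge>1. \<omega> n > 0"
  shows "in_X \<omega> (hfun m \<mu>) \<longleftrightarrow>
           summable (\<lambda>n. cmod \<mu> ^ (2 * n) / \<omega> ((2 * m + 1) * 2 ^ n)) \<and>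
           summable (\<lambda>n. cmod \<mu> ^ (2 * n) / \<omega> ((6 * m + 4) * 2 ^ n))"
proof -
  have "in_X \<omega> (hfun m \<mu>) \<longleftrightarrow> summable (\<lambda>k. (cmod (hcoeff m \<mu> k))\<^sup>2 / \<omega> k)"
    unfolding in_X_def by (simp add: hfun_holomorphic tcoeff_hfun hcoeff_less_3)
  also have "\<dots> \<longleftrightarrow> summable (\<lambda>n. cmod \<mu> ^ (2 * n) / \<omega> ((2 * m + 1) * 2 ^ n)) \<and>
                    summable (\<lambda>n. cmod \<mu> ^ (2 * n) / \<omega> ((6 * m + 4) * 2 ^ n))"
  proof (cases "m = 0")
    case True
    \<comment> \<open>\<open>h\<^sub>0\<close> lives on the orbit of \<open>4\<close> alone; the series over \<open>\<omega>(2\<^sup>n)\<close> is a shift of the one over \<open>\<omega>(4\<cdot>2\<^sup>n)\<close>.\<close>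
    then show ?thesis
      using summable_dyadic_weight_shift[of "cmod \<mu>" \<omega> 1 2]
      by (auto simp: hcoeff_def summable_dyadic_coeff_weighted_iff)
  next
    case False
    have nonneg: "0 \<le> (cmod (dyadic_coeff b \<mu> k))\<^sup>2 / \<omega> k" if "b \<ge> 1" for b k
      using pos that by (cases "k = 0") (auto simp: dyadic_coeff_less intro!: divide_nonneg_pos)
    have "(cmod (hcoeff m \<mu> k))\<^sup>2 / \<omega> k =
          (cmod (dyadic_coeff (2 * m + 1) \<mu> k))\<^sup>2 / \<omega> k
          + (cmod (dyadic_coeff (6 * m + 4) \<mu> k))\<^sup>2 / \<omega> k" for k
      using dyadic_coeff_orbits_disjoint[of m \<mu> k] False
      by (auto simp: hcoeff_def add_divide_distrib)
    then show ?thesis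
      using False
      by (simp add: summable_add_nonneg_iff nonneg summable_dyadic_coeff_weighted_iff)
  qed
  finally show ?thesis .
qed

lemma summable_power_div_geometric_weight:
  fixes w :: "nat \<Rightarrow> real"
  assumes C: "C > 0" and rq: "r\<^sup>2 < q" and w: "\<And>n. C * q ^ n \<le> w n"
  shows "summable (\<lambda>n. r ^ (2 * n) / w n)"
proof (rule summable_comparison_test[of _ "\<lambda>n. (r\<^sup>2 / q) ^ n / C"])
  have q: "q > 0"
    using rq zero_le_power2[of r] by linarith
  then have "norm (r\<^sup>2 / q) < 1"
    using rq by simp
  then show "summable (\<lambda>n. (r\<^sup>2 / q) ^ n / C)"
    by (intro summable_divide summable_geometric)
  show "\<exists>N. \<forall>n\<ge>N. norm (r ^ (2 * n) / w n) \<le> (r\<^sup>2 / q) ^ n / C"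
  proof (intro exI allI impI)
    fix n
    have Cq: "0 < C * q ^ n"
      using C q by simp
    have "norm (r ^ (2 * n) / w n) = (r\<^sup>2) ^ n / w n"
      using Cq w[of n] by (simp add: power_mult)
    also have "\<dots> \<le> (r\<^sup>2) ^ n / (C * q ^ n)"
      using Cq w[of n] by (intro divide_left_mono) auto
    also have "\<dots> = (r\<^sup>2 / q) ^ n / C"
      by (simp add: power_divide)
    finally show "norm (r ^ (2 * n) / w n) \<le> (r\<^sup>2 / q) ^ n / C" .
  qed
qed

lemma in_X_hfun_if_bounded_below:
  fixes \<omega> :: "nat \<Rightarrow> real"
  assumes "c > 0" and bound: "\<forall>n\<ge>1. c \<le> \<omega> n" and "cmod \<mu> < 1"
  shows "in_X \<omega> (hfun m \<mu>)"
proof -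
  have "c * 1 ^ n \<le> \<omega> (b * 2 ^ n)" if "b \<ge> 1" for b n
    using bound that by (simp add: Suc_le_eq)
  moreover have "(cmod \<mu>)\<^sup>2 < 1"
    using assms by (simp add: abs_square_less_1)
  ultimately have dyadic: "summable (\<lambda>n. cmod \<mu> ^ (2 * n) / \<omega> (b * 2 ^ n))" if "b \<ge> 1" for b
    using that \<open>c > 0\<close> by (intro summable_power_div_geometric_weight[of c "cmod \<mu>" 1]) auto
  have pos: "\<forall>n\<ge>1. \<omega> n > 0"
    using assms by (auto intro: less_le_trans)
  show ?thesis
    unfolding in_X_hfun_iff[OF pos] by (intro conjI dyadic) simp_all
qed

lemma in_X_omega0_hfun:
  assumes "cmod \<mu> < sqrt 2"
  shows "in_X omega0 (hfun m \<mu>)"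
proof -
  have "1 / pi * 2 ^ n \<le> omega0 (b * 2 ^ n)" if "b \<ge> 1" for b n
  proof -
    have "1 / pi * 2 ^ n = 2 ^ n / pi"
      by simp
    also have "\<dots> \<le> (real b * 2 ^ n + 1) / pi"
    proof (rule divide_right_mono)
      have "(2::real) ^ n \<le> real b * 2 ^ n"
        using that by simp
      then show "(2::real) ^ n \<le> real b * 2 ^ n + 1"
        by linarith
    qed simp
    also have "\<dots> = omega0 (b * 2 ^ n)"
      by (simp add: omega0_def)
    finally show ?thesis .
  qed
  moreover have "(cmod \<mu>)\<^sup>2 < (sqrt 2)\<^sup>2"
    using assms by (intro power_strict_mono) auto
  ultimately have dyadic: "summable (\<lambda>n. cmod \<mu> ^ (2 * n) / omega0 (b * 2 ^ n))" if "b \<ge> 1" for b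
    using that by (intro summable_power_div_geometric_weight[of "1 / pi" "cmod \<mu>" 2]) simp_all
  have pos: "\<forall>n\<ge>1. omega0 n > 0"
    by (simp add: omega0_def)
  show ?thesis
    unfolding in_X_hfun_iff[OF pos] by (intro conjI dyadic) simp_all
qed

theorem proposition2p3:
  fixes \<omega> :: "nat \<Rightarrow> real"
  assumes pos: "\<forall>n\<ge>1. \<omega> n > 0"
  shows "(\<forall>m \<mu>. in_X \<omega> (hfun m \<mu>) \<longleftrightarrow>
            summable (\<lambda>n. cmod \<mu> ^ (2 * n) / \<omega> ((2 * m + 1) * 2 ^ n)) \<and>
            summable (\<lambda>n. cmod \<mu> ^ (2 * n) / \<omega> ((6 * m + 4) * 2 ^ n)))
       \<and> (\<forall>m \<mu>. in_X \<omega> (hfun m \<mu>) \<longrightarrow>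
            (\<forall>z\<in>ball 0 1. collatz_op (hfun m \<mu>) z = \<mu> * hfun m \<mu> z))
       \<and> ((\<exists>c>0. \<forall>n\<ge>1. c \<le> \<omega> n) \<longrightarrow>
            (\<forall>m \<mu>. cmod \<mu> < 1 \<longrightarrow> in_X \<omega> (hfun m \<mu>)))
       \<and> (\<forall>m \<mu>. cmod \<mu> < sqrt 2 \<longrightarrow> in_X omega0 (hfun m \<mu>))"
proof (intro conjI allI impI ballI)
  fix m \<mu> z
  show "in_X \<omega> (hfun m \<mu>) \<longleftrightarrow>
          summable (\<lambda>n. cmod \<mu> ^ (2 * n) / \<omega> ((2 * m + 1) * 2 ^ n)) \<and>
          summable (\<lambda>n. cmod \<mu> ^ (2 * n) / \<omega> ((6 * m + 4) * 2 ^ n))"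
    using pos by (rule in_X_hfun_iff)
  show "z \<in> ball 0 1 \<Longrightarrow> collatz_op (hfun m \<mu>) z = \<mu> * hfun m \<mu> z"
    by (rule collatz_op_hfun)
  show "cmod \<mu> < sqrt 2 \<Longrightarrow> in_X omega0 (hfun m \<mu>)"
    by (rule in_X_omega0_hfun)
next
  fix m \<mu>
  assume "\<exists>c>0. \<forall>n\<ge>1. c \<le> \<omega> n" and "cmod \<mu> < 1"
  then obtain c where "c > 0" "\<forall>n\<ge>1. c \<le> \<omega> n"
    by blast
  then show "in_X \<omega> (hfun m \<mu>)"
    using \<open>cmod \<mu> < 1\<close> by (rule in_X_hfun_if_bounded_below)
qed

end
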